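(* Let $p>3$ be a prime, $q=p^h$, and $a,b\in\mathbb{F}_{q^2}^*$. Then $\deg\gcd\bigl(N_{a,b}(X),D_{a,b}(X)\bigr)=2$ if and only if $b=v/a^2$ for some $v\in\mathbb{F}_q^*$ satisfying $v^2-a^{q+1}v-a^{3q+3}=0$. In this case the common factor is (up to a scalar) $bX^2-a^qX-a^{q+1}+b^{q+1}$.
   Context: $N_{a,b}(X)=a^qX^3+X^2+b^q$ and $D_{a,b}(X)=bX^3+X+a$, polynomials in $\mathbb{F}_{q^2}[X]$; gcd means the monic greatest common divisor in $\mathbb{F}_{q^2}[X]$. *)

theory Defs
  imports "HOL-Computational_Algebra.Computational_Algebra" "HOL-Library.Cardinality"
begin

definition Npoly :: "nat \<Rightarrow> 'a::field \<Rightarrow> 'a \<Rightarrow> 'a poly" where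
  "Npoly q a b = [: b ^ q, 0, 1, a ^ q :]"

definition Dpoly :: "'a::field \<Rightarrow> 'a \<Rightarrow> 'a poly" where
  "Dpoly a b = [: a, 1, 0, b :]"

end

theory Submission
  imports Defs
begin

text \<open>Eliminating the cubic terms, \<open>b N - a^q D\<close> is the quadratic
  \<open>F = b X^2 - a^q X + b^(q+1) - a^(q+1)\<close>, so \<open>gcd N D = gcd F D\<close>, which has degree 2 exactly
  when \<open>F\<close> divides \<open>D\<close>. Dividing \<open>b D\<close> by \<open>F\<close> leaves a linear remainder; with \<open>v = a^2 b\<close>
  its two coefficients vanish iff \<open>v^q = v\<close> and \<open>v^2 - a^(q+1) v - a^(3q+3) = 0\<close>.\<close>

lemma dvd_iff_remainder_eq_0:
  fixes x y s r :: "'a::field poly"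
  assumes "x = y * s + r" and "degree r < degree y"
  shows "y dvd x \<longleftrightarrow> r = 0"
proof -
  have "y dvd x \<longleftrightarrow> y dvd r" using assms(1) by (simp add: dvd_add_right_iff)
  also have "\<dots> \<longleftrightarrow> r = 0"
    using assms(2) dvd_imp_degree_le by (metis dvd_0_right leD)
  finally show ?thesis .
qed

lemma gcd_eq_smult_if_dvd:
  fixes p r :: "'a::field_gcd poly"
  assumes "p \<noteq> 0" and "p dvd r"
  shows "gcd p r = smult (inverse (lead_coeff p)) p"
proof -
  have "gcd p r = normalize p" using assms(2) by (rule gcd_proj1_if_dvd)
  also have "\<dots> = smult (inverse (lead_coeff p)) p"
  proof -
    have "unit_factor (lead_coeff p) = lead_coeff p"
      using assms(1) by (intro is_unit_unit_factor) (simp add: dvd_field_iff)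
    then show ?thesis
      by (simp add: normalize_poly_eq_map_poly smult_conv_map_poly field_simps)
  qed
  finally show ?thesis .
qed

lemma degree_gcd_eq_degree_iff:
  fixes p r :: "'a::field_gcd poly"
  assumes "p \<noteq> 0"
  shows "degree (gcd p r) = degree p \<longleftrightarrow> p dvd r"
proof
  assume deg: "degree (gcd p r) = degree p"
  obtain k where k: "p = gcd p r * k" by (meson dvd_def gcd_dvd1)
  with assms have "k \<noteq> 0" and "gcd p r \<noteq> 0" by auto
  with k deg have "degree k = 0" by (metis add_cancel_right_right degree_mult_eq)
  with \<open>k \<noteq> 0\<close> have "is_unit k" by (simp add: is_unit_iff_degree)
  then have "p dvd gcd p r" by (subst k) (simp add: mult_unit_dvd_iff)
  then show "p dvd r" using gcd_dvd2 dvd_trans by blast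
next
  assume "p dvd r"
  then show "degree (gcd p r) = degree p"
    using assms by (simp add: gcd_eq_smult_if_dvd)
qed

definition common_factor :: "nat \<Rightarrow> 'a::field \<Rightarrow> 'a \<Rightarrow> 'a poly" where
  "common_factor q a b = [: b ^ (q + 1) - a ^ (q + 1), - (a ^ q), b :]"

lemma smult_Npoly_eq:
  "smult b (Npoly q a b) = common_factor q a b + smult (a ^ q) (Dpoly a b)"
  by (simp add: Npoly_def Dpoly_def common_factor_def algebra_simps)

lemma gcd_Npoly_Dpoly:
  fixes a b :: "'a::field_gcd"
  assumes "b \<noteq> 0"
  shows "gcd (Npoly q a b) (Dpoly a b) = gcd (common_factor q a b) (Dpoly a b)"
proof -
  have "is_unit [:b:]"
    using assms by (simp add: is_unit_const_poly_iff dvd_field_iff)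
  then have "gcd (Npoly q a b) (Dpoly a b) = gcd (smult b (Npoly q a b)) (Dpoly a b)"
    using gcd_mult_unit1[of "[:b:]" "Npoly q a b" "Dpoly a b"] by (simp add: mult.commute)
  also have "\<dots> = gcd (common_factor q a b + smult (a ^ q) (Dpoly a b)) (Dpoly a b)"
    by (simp flip: smult_Npoly_eq)
  also have "\<dots> = gcd (common_factor q a b) (Dpoly a b)"
    using gcd_add_mult[of "Dpoly a b" "[:a ^ q:]" "common_factor q a b"]
    by (simp add: gcd.commute add.commute)
  finally show ?thesis .
qed

lemma common_factor_dvd_Dpoly_iff:
  fixes a b :: "'a::field"
  assumes "b \<noteq> 0"
  shows "common_factor q a b dvd Dpoly a b \<longleftrightarrow>
    a * b - a ^ q * (b ^ q * b - a ^ q * a) = 0 \<and>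
    b - b ^ q * b\<^sup>2 + a ^ q * a * b + (a ^ q)\<^sup>2 = 0"
proof -
  have "common_factor q a b dvd Dpoly a b \<longleftrightarrow> common_factor q a b dvd smult b (Dpoly a b)"
    using assms by (simp add: dvd_smult_iff)
  also have "\<dots> \<longleftrightarrow> [: a * b - a ^ q * (b ^ q * b - a ^ q * a),
                      b - b ^ q * b\<^sup>2 + a ^ q * a * b + (a ^ q)\<^sup>2 :] = 0"
    using assms
    by (intro dvd_iff_remainder_eq_0[where s = "[: a ^ q, b :]"])
       (simp_all add: Dpoly_def common_factor_def algebra_simps power2_eq_square)
  finally show ?thesis by simp
qed

lemma remainder_eq_0_iff:
  fixes a b A B :: "'a::field"
  assumes "A \<noteq> 0" and "b \<noteq> 0"
  shows "a * b - A * (B * b - A * a) = 0 \<and> b - B * b\<^sup>2 + A * a * b + A\<^sup>2 = 0 \<longleftrightarrow>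
    A\<^sup>2 * B = a\<^sup>2 * b \<and> a * b\<^sup>2 - A * b - A ^ 3 = 0"
  using assms by algebra

lemma remainder_condition_iff_exists_v:
  fixes a b :: "'a::field"
  assumes "a \<noteq> 0" and "b \<noteq> 0"
  shows "(a ^ q)\<^sup>2 * b ^ q = a\<^sup>2 * b \<and> a * b\<^sup>2 - a ^ q * b - (a ^ q) ^ 3 = 0 \<longleftrightarrow>
    (\<exists>v. v \<noteq> 0 \<and> v ^ q = v \<and> b = v / a ^ 2 \<and> v ^ 2 - a ^ (q + 1) * v - a ^ (3 * q + 3) = 0)"
proof -
  have power_q: "(a\<^sup>2 * b) ^ q = (a ^ q)\<^sup>2 * b ^ q"
    by (simp add: power_mult_distrib flip: power_mult) (simp add: mult.commute)
  have quadratic: "(a\<^sup>2 * b)\<^sup>2 - a ^ (q + 1) * (a\<^sup>2 * b) - a ^ (3 * q + 3) =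
      a ^ 3 * (a * b\<^sup>2 - a ^ q * b - (a ^ q) ^ 3)"
    by (simp add: algebra_simps power2_eq_square power3_eq_cube power_add power_mult flip: power_Suc)
  have "(\<exists>v. v \<noteq> 0 \<and> v ^ q = v \<and> b = v / a ^ 2 \<and> v ^ 2 - a ^ (q + 1) * v - a ^ (3 * q + 3) = 0)
      \<longleftrightarrow> (a\<^sup>2 * b) ^ q = a\<^sup>2 * b \<and>
          (a\<^sup>2 * b)\<^sup>2 - a ^ (q + 1) * (a\<^sup>2 * b) - a ^ (3 * q + 3) = 0"
    using assms by (auto simp: field_simps)
  also have "\<dots> \<longleftrightarrow> (a ^ q)\<^sup>2 * b ^ q = a\<^sup>2 * b \<and> a ^ 3 * (a * b\<^sup>2 - a ^ q * b - (a ^ q) ^ 3) = 0"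
    by (simp only: power_q quadratic)
  finally show ?thesis
    using assms by simp
qed

theorem mainTheorem4:
  fixes p h q :: nat and a b :: "'a::{field_gcd, finite}"
  assumes "prime p" and "p > 3" and "h > 0" and "q = p ^ h"
    and "CARD('a) = q ^ 2"
    and "a \<noteq> 0" and "b \<noteq> 0"
  shows "(degree (gcd (Npoly q a b) (Dpoly a b)) = 2 \<longleftrightarrow>
           (\<exists>v. v \<noteq> 0 \<and> v ^ q = v \<and> b = v / a ^ 2 \<and>
                v ^ 2 - a ^ (q + 1) * v - a ^ (3 * q + 3) = 0))
      \<and> (degree (gcd (Npoly q a b) (Dpoly a b)) = 2 \<longrightarrow>
           (\<exists>c. c \<noteq> 0 \<and> gcd (Npoly q a b) (Dpoly a b) =
                smult c [: b ^ (q + 1) - a ^ (q + 1), - (a ^ q), b :]))"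
proof -
  let ?F = "common_factor q a b" and ?D = "Dpoly a b"
  have a0: "a \<noteq> 0" and b0: "b \<noteq> 0" using assms by simp_all
  have F0: "?F \<noteq> 0" and degF: "degree ?F = 2" and lcF: "lead_coeff ?F = b"
    using b0 by (simp_all add: common_factor_def)
  have gcd_eq: "gcd (Npoly q a b) ?D = gcd ?F ?D"
    using b0 by (rule gcd_Npoly_Dpoly)
  have deg_iff: "degree (gcd ?F ?D) = 2 \<longleftrightarrow> ?F dvd ?D"
    using degree_gcd_eq_degree_iff[OF F0] degF by simp
  have dvd_iff: "?F dvd ?D \<longleftrightarrow>
      (\<exists>v. v \<noteq> 0 \<and> v ^ q = v \<and> b = v / a ^ 2 \<and> v ^ 2 - a ^ (q + 1) * v - a ^ (3 * q + 3) = 0)"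
    using common_factor_dvd_Dpoly_iff[OF b0] remainder_eq_0_iff[of "a ^ q" b a "b ^ q"]
      remainder_condition_iff_exists_v[OF a0 b0] a0 b0 by simp
  have "degree (gcd (Npoly q a b) ?D) = 2 \<Longrightarrow> gcd (Npoly q a b) ?D = smult (inverse b) ?F"
    using gcd_eq deg_iff gcd_eq_smult_if_dvd[OF F0] lcF by simp
  then show ?thesis
    using gcd_eq deg_iff dvd_iff b0 unfolding common_factor_def by (metis inverse_nonzero_iff_nonzero)
qed

end
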